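(* Let $\phi$ be a function of cubic type (see context), let $T>0$, $Q_T=\mathbb{R}\times(0,T)$, and let $u_0\in L^\infty(\mathbb{R})$ satisfy: $\phi(u_0)\in C(\mathbb{R})$, $\phi(u_0)\in C^1((-\infty,0))\cap C^1((0,\infty))$, $\phi(u_0)'\in L^1((-\infty,0))\cap L^1((0,\infty))$, and $u_0(x)\in(b,c)$ for $x\in(-\infty,0)$, $u_0(x)\in[c,\infty)$ for $x\in(0,\infty)$. Let $(u,v,\xi)$ be a two-phase solution (in the sense described in the context) of $u_t=\phi(u)_{xx}$ in $Q_T$, $u(\cdot,0)=u_0$, with $u=\beta_0(v)$ in $V_1$ and $u=\beta_2(v)$ in $V_2$. If $(t_1,t_2)\subset(0,T)$ and $v(\xi(t),t)>A$ for all $t\in(t_1,t_2)$, then $\xi'(t)\le 0$ for all $t\in(t_1,t_2)$.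
   Context: Cubic-type $\phi$: $\phi\in \mathrm{Lip}_{loc}(\mathbb{R})$, $\lim_{u\to\pm\infty}\phi(u)=\pm\infty$, $\phi$ has a local maximum $B=\phi(b)$ and a local minimum $A=\phi(c)$ with $b<c$, $A<B$, $\phi$ is increasing on $(-\infty,b)$ and on $(c,\infty)$ and decreasing on $(b,c)$. Let $\beta_1,\beta_0,\beta_2$ be the inverses of the restrictions of $\phi$ to $(-\infty,b]$, $[b,c]$, $[c,\infty)$ respectively. Two-phase solution: a triple $(u,v,\xi)$ with (i) $u\in L^\infty(Q_T)$, $v\in L^2((0,T);H^1_{loc}(\mathbb{R}))$, $v\in C(\overline V_1)\cap C(\overline V_2)$, $v_x\in L^\infty((0,T);L^1(\mathbb{R}))$, $\xi\in C^1([0,T])$, $\xi(0)=0$, $t\mapsto v(\xi(t),t)$ continuous on $[0,T]$, and $\lim_{\delta\to0^+}v(\xi(t)+\delta,t)=\lim_{\delta\to0^-}v(\xi(t)+\delta,t)$ for every $t\in(0,T)$, where $V_1=\{(x,t): x<\xi(t),\ t\in(0,T)\}$, $V_2=\{(x,t): x>\xi(t),\ t\in(0,T)\}$; (ii) $u=\beta_0(v)$ in $V_1$, $u=\beta_2(v)$ in $V_2$ (so $v=\phi(u)$); (iii) $\iint_{Q_T}(u\psi_t-v_x\psi_x)\,dxdt+\int_{\mathbb{R}}u_0(x)\psi(x,0)\,dx=0$ for all $\psi\in C^1(\overline Q_T)$ with $\psi(\cdot,T)=0$ (and suitable decay so the integrals make sense); (iv) entropy inequality: $\iint_{Q_T}\{G(u)\psi_t-g(v)v_x\psi_x-g'(v)|v_x|^2\psi\}\,dxdt\ge0$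 for all $\psi\in C_0^\infty(Q_T)$, $\psi\ge0$, and all $g\in C^1(\mathbb{R})$ with $g'\ge0$, where $G(u)=\int_k^u g(\phi(s))\,ds$ for a fixed $k\in\mathbb{R}$. *)

theory Defs
  imports "HOL-Analysis.Analysis"
begin

definition cubic_type :: "(real \<Rightarrow> real) \<Rightarrow> real \<Rightarrow> real \<Rightarrow> bool" where
  "cubic_type phi b c \<longleftrightarrow>
     (\<forall>K. compact K \<longrightarrow> (\<exists>L. L-lipschitz_on K phi)) \<and>
     filterlim phi at_top at_top \<and> filterlim phi at_bot at_bot \<and>
     b < c \<and>
     strict_mono_on {..b} phi \<and>
     strict_antimono_on {b..c} phi \<and>
     strict_mono_on {c..} phi"

definition beta0 :: "(real \<Rightarrow> real) \<Rightarrow> real \<Rightarrow> real \<Rightarrow> real \<Rightarrow> real" where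
  "beta0 phi b c = the_inv_into {b..c} phi"

definition beta2 :: "(real \<Rightarrow> real) \<Rightarrow> real \<Rightarrow> real \<Rightarrow> real" where
  "beta2 phi c = the_inv_into {c..} phi"

definition is_partials ::
  "(real \<times> real \<Rightarrow> real) \<Rightarrow> (real \<times> real \<Rightarrow> real) \<Rightarrow> (real \<times> real \<Rightarrow> real) \<Rightarrow> bool" where
  "is_partials f fx ft \<longleftrightarrow>
     (\<forall>x t. ((\<lambda>y. f (y, t)) has_real_derivative fx (x, t)) (at x) \<and>
            ((\<lambda>s. f (x, s)) has_real_derivative ft (x, t)) (at t))"

primrec C_k :: "nat \<Rightarrow> (real \<times> real \<Rightarrow> real) \<Rightarrow> bool" where
  "C_k 0 f = continuous_on UNIV f"
| "C_k (Suc k) f = (\<exists>fx ft. is_partials f fx ft \<and> C_k k f \<and> C_k k fx \<and> C_k k ft)"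

definition C_inf :: "(real \<times> real \<Rightarrow> real) \<Rightarrow> bool" where
  "C_inf f \<longleftrightarrow> (\<forall>k. C_k k f)"

definition Q :: "real \<Rightarrow> (real \<times> real) set" where
  "Q T = UNIV \<times> {0<..<T}"

definition test_fun :: "real \<Rightarrow> (real \<times> real \<Rightarrow> real) \<Rightarrow> bool" where
  "test_fun T psi \<longleftrightarrow> C_inf psi \<and>
     (\<exists>K. compact K \<and> K \<subseteq> Q T \<and> (\<forall>p. p \<notin> K \<longrightarrow> psi p = 0))"

definition V1 :: "real \<Rightarrow> (real \<Rightarrow> real) \<Rightarrow> (real \<times> real) set" where
  "V1 T xi = {(x, t). x < xi t \<and> 0 < t \<and> t < T}"

definition V2 :: "real \<Rightarrow> (real \<Rightarrow> real) \<Rightarrow> (real \<times> real) set" where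
  "V2 T xi = {(x, t). x > xi t \<and> 0 < t \<and> t < T}"

definition Linf_Q :: "real \<Rightarrow> (real \<times> real \<Rightarrow> real) \<Rightarrow> bool" where
  "Linf_Q T u \<longleftrightarrow> set_borel_measurable lborel (Q T) u \<and>
     (\<exists>M. AE p in lborel. p \<in> Q T \<longrightarrow> \<bar>u p\<bar> \<le> M)"

definition Linf_R :: "(real \<Rightarrow> real) \<Rightarrow> bool" where
  "Linf_R f \<longleftrightarrow> f \<in> borel_measurable lborel \<and> (\<exists>M. AE x in lborel. \<bar>f x\<bar> \<le> M)"

text \<open>vx is the weak x-derivative of v, and v belongs to L^2((0,T); H^1_loc(R)),
  v_x belongs to L^infinity((0,T); L^1(R)).\<close>
definition weak_regularity ::
  "real \<Rightarrow> (real \<times> real \<Rightarrow> real) \<Rightarrow> (real \<times> real \<Rightarrow> real) \<Rightarrow> bool" where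
  "weak_regularity T v vx \<longleftrightarrow>
     set_borel_measurable lborel (Q T) v \<and> set_borel_measurable lborel (Q T) vx \<and>
     (\<forall>R. set_integrable lborel ({-R..R} \<times> {0<..<T}) (\<lambda>p. (v p)\<^sup>2) \<and>
          set_integrable lborel ({-R..R} \<times> {0<..<T}) (\<lambda>p. (vx p)\<^sup>2)) \<and>
     (\<forall>psi psix psit. test_fun T psi \<and> is_partials psi psix psit \<longrightarrow>
        (LINT p:Q T|lborel. v p * psix p) = - (LINT p:Q T|lborel. vx p * psi p)) \<and>
     (\<exists>M. AE t in lborel. t \<in> {0<..<T} \<longrightarrow>
        integrable lborel (\<lambda>x. vx (x, t)) \<and> (LINT x|lborel. \<bar>vx (x, t)\<bar>) \<le> M)"

definition two_phase_solution ::
  "(real \<Rightarrow> real) \<Rightarrow> real \<Rightarrow> real \<Rightarrow> real \<Rightarrow> (real \<Rightarrow> real) \<Rightarrow>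
   (real \<times> real \<Rightarrow> real) \<Rightarrow> (real \<times> real \<Rightarrow> real) \<Rightarrow> (real \<Rightarrow> real) \<Rightarrow> bool" where
  "two_phase_solution phi b c T u0 u v xi \<longleftrightarrow>
     (\<exists>vx.
       \<comment> \<open>(i) regularity\<close>
       Linf_Q T u \<and> weak_regularity T v vx \<and>
       (\<exists>w1. continuous_on (closure (V1 T xi)) w1 \<and> (\<forall>p\<in>V1 T xi. w1 p = v p)) \<and>
       (\<exists>w2. continuous_on (closure (V2 T xi)) w2 \<and> (\<forall>p\<in>V2 T xi. w2 p = v p)) \<and>
       (\<exists>dxi. (\<forall>t\<in>{0..T}. (xi has_real_derivative dxi t) (at t within {0..T})) \<and>
              continuous_on {0..T} dxi) \<and>
       xi 0 = 0 \<and>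
       continuous_on {0..T} (\<lambda>t. v (xi t, t)) \<and>
       (\<forall>t\<in>{0<..<T}. ((\<lambda>d. v (xi t + d, t)) \<longlongrightarrow> v (xi t, t)) (at_right 0) \<and>
                      ((\<lambda>d. v (xi t + d, t)) \<longlongrightarrow> v (xi t, t)) (at_left 0)) \<and>
       \<comment> \<open>(ii) phase conditions\<close>
       (AE p in lborel. p \<in> V1 T xi \<longrightarrow>
          v p \<in> {phi c..phi b} \<and> u p = beta0 phi b c (v p)) \<and>
       (AE p in lborel. p \<in> V2 T xi \<longrightarrow>
          v p \<ge> phi c \<and> u p = beta2 phi c (v p)) \<and>
       \<comment> \<open>(iii) weak formulation\<close>
       (\<forall>psi psix psit R. C_k 1 psi \<and> is_partials psi psix psit \<and>
           (\<forall>x. psi (x, T) = 0) \<and> (\<forall>x t. \<bar>x\<bar> \<ge> R \<longrightarrow> psi (x, t) = 0) \<longrightarrow>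
          (LINT p:Q T|lborel. u p * psit p - vx p * psix p)
            + (LINT x|lborel. u0 x * psi (x, 0)) = 0) \<and>
       \<comment> \<open>(iv) entropy inequality, with G(u) = integral from k = 0 to u of g(phi s)\<close>
       (\<forall>psi psix psit g dg. test_fun T psi \<and> is_partials psi psix psit \<and>
           (\<forall>p. psi p \<ge> 0) \<and>
           (\<forall>y. (g has_real_derivative dg y) (at y)) \<and> continuous_on UNIV dg \<and>
           (\<forall>y. dg y \<ge> 0) \<longrightarrow>
          (LINT p:Q T|lborel. (LBINT s=0..u p. g (phi s)) * psit p
               - g (v p) * vx p * psix p - dg (v p) * (vx p)\<^sup>2 * psi p) \<ge> 0))"

end

theory Submission
  imports Defs "HOL-Computational_Algebra.Polynomial"
begin

text \<open>Suppose the interface moves to the right at a time \<open>t\<^sub>0\<close> where \<open>v(\<xi>(t\<^sub>0), t\<^sub>0) > A = \<phi>(c)\<close>.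
  Pick \<open>m\<close> between \<open>A\<close> and \<open>v(\<xi>(t\<^sub>0), t\<^sub>0)\<close>; by continuity of \<open>v\<close> up to the interface from both sides,
  \<open>v > m\<close> near the interface point. Test the entropy inequality with \<open>g(v) = -((m - v)\<^sup>+)\<^sup>2\<close>, which
  vanishes together with \<open>g'\<close> where \<open>v > m\<close>, and with a product of bumps \<open>\<psi>(x, t) = \<alpha>(x) \<beta>(t)\<close>
  centred there. Only \<open>G(u) \<psi>\<^sub>t\<close> survives, and \<open>G(u)\<close> is constant in each phase, strictly smaller in
  the right phase because \<open>\<phi>\<close> drops below \<open>m\<close> near \<open>c\<close>. Fubini and an integration by parts in time
  turn the integral into \<open>(G\<^sub>r - G\<^sub>l) \<integral> \<beta>(t) \<alpha>(\<xi>(t)) \<xi>'(t) dt\<close>, which is negative if \<open>\<xi>' > 0\<close>,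
  contradicting the entropy inequality.\<close>

section \<open>Smooth bump functions\<close>

fun has_derivs :: "nat \<Rightarrow> (real \<Rightarrow> real) \<Rightarrow> bool" where
  "has_derivs 0 f = True"
| "has_derivs (Suc n) f \<longleftrightarrow> (\<forall>x. (f has_real_derivative deriv f x) (at x)) \<and> has_derivs n (deriv f)"

definition smooth_fun :: "(real \<Rightarrow> real) \<Rightarrow> bool" where
  "smooth_fun f \<longleftrightarrow> (\<forall>n. has_derivs n f)"

lemma has_derivs_Suc_imp: "has_derivs (Suc n) f \<Longrightarrow> has_derivs n f"
  by (induction n arbitrary: f) auto

lemma has_derivs_const: "has_derivs n (\<lambda>x. k)"
proof (induction n arbitrary: k)
  case (Suc n)
  have "deriv (\<lambda>x. k) = (\<lambda>x. 0)" by (rule ext) simp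
  with Suc show ?case by simp
qed simp

lemma has_derivs_add: "has_derivs n f \<Longrightarrow> has_derivs n g \<Longrightarrow> has_derivs n (\<lambda>x. f x + g x)"
proof (induction n arbitrary: f g)
  case (Suc n)
  then have D: "((\<lambda>x. f x + g x) has_real_derivative deriv f x + deriv g x) (at x)" for x
    by (intro DERIV_add) auto
  then have "deriv (\<lambda>x. f x + g x) = (\<lambda>x. deriv f x + deriv g x)"
    by (intro ext DERIV_imp_deriv)
  with Suc D show ?case by simp
qed simp

lemma has_derivs_mult: "has_derivs n f \<Longrightarrow> has_derivs n g \<Longrightarrow> has_derivs n (\<lambda>x. f x * g x)"
proof (induction n arbitrary: f g)
  case (Suc n)
  then have D: "((\<lambda>x. f x * g x) has_real_derivative deriv f x * g x + f x * deriv g x) (at x)" for x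
    by (intro derivative_eq_intros) auto
  then have "deriv (\<lambda>x. f x * g x) = (\<lambda>x. deriv f x * g x + f x * deriv g x)"
    by (intro ext DERIV_imp_deriv)
  with Suc D show ?case by (simp add: has_derivs_add has_derivs_Suc_imp)
qed simp

lemma has_derivs_affine: "has_derivs n f \<Longrightarrow> has_derivs n (\<lambda>x. f (a * x + k))"
proof (induction n arbitrary: f)
  case (Suc n)
  then have D: "((\<lambda>x. f (a * x + k)) has_real_derivative deriv f (a * x + k) * a) (at x)" for x
    by (intro derivative_eq_intros DERIV_chain2[where f = f]) auto
  then have "deriv (\<lambda>x. f (a * x + k)) = (\<lambda>x. deriv f (a * x + k) * a)"
    by (intro ext DERIV_imp_deriv)
  with Suc D show ?case by (simp add: has_derivs_mult has_derivs_const)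
qed simp

lemma smooth_fun_has_derivative: "smooth_fun f \<Longrightarrow> (f has_real_derivative deriv f x) (at x)"
  unfolding smooth_fun_def by (metis has_derivs.simps(2))

lemma smooth_fun_deriv: "smooth_fun f \<Longrightarrow> smooth_fun (deriv f)"
  unfolding smooth_fun_def by (metis has_derivs.simps(2))

lemma smooth_fun_continuous: "smooth_fun f \<Longrightarrow> continuous_on UNIV f"
  by (rule continuous_at_imp_continuous_on) (auto intro: DERIV_isCont smooth_fun_has_derivative)

lemma smooth_fun_mult: "smooth_fun f \<Longrightarrow> smooth_fun g \<Longrightarrow> smooth_fun (\<lambda>x. f x * g x)"
  unfolding smooth_fun_def using has_derivs_mult by blast

lemma smooth_fun_affine: "smooth_fun f \<Longrightarrow> smooth_fun (\<lambda>x. f (a * x + k))"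
  unfolding smooth_fun_def using has_derivs_affine by blast

text \<open>The functions \<open>P(1/y) e\<^sup>-\<^sup>1\<^sup>/\<^sup>y\<close> (and \<open>0\<close> for \<open>y \<le> 0\<close>) are closed under differentiation,
  which makes \<open>e\<^sup>-\<^sup>1\<^sup>/\<^sup>y\<close> smooth.\<close>
definition expinv_poly :: "real poly \<Rightarrow> real \<Rightarrow> real" where
  "expinv_poly P y = (if 0 < y then poly P (1 / y) * exp (- (1 / y)) else 0)"

lemma poly_times_exp_neg_tendsto_0: "((\<lambda>z. poly P z * exp (- z)) \<longlongrightarrow> (0::real)) at_top"
proof -
  have "((\<lambda>z. \<Sum>i\<le>degree P. coeff P i * (z ^ i / exp z)) \<longlongrightarrow> (\<Sum>i\<le>degree P. coeff P i * 0)) at_top"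
    by (intro tendsto_sum tendsto_mult tendsto_const tendsto_power_div_exp_0)
  moreover have "(\<Sum>i\<le>degree P. coeff P i * (z ^ i / exp z)) = poly P z * exp (- z)" for z :: real
    by (simp add: poly_altdef exp_minus divide_inverse sum_distrib_right mult.assoc)
  ultimately show ?thesis by simp
qed

lemma expinv_poly_has_derivative_0: "(expinv_poly P has_real_derivative 0) (at 0)"
proof -
  have "((\<lambda>y. poly (pCons 0 P) (inverse y) * exp (- inverse y)) \<longlongrightarrow> 0) (at_right 0)"
    using filterlim_compose[OF poly_times_exp_neg_tendsto_0[of "pCons 0 P"] filterlim_inverse_at_top_right]
    by (simp add: o_def)
  moreover have "\<forall>\<^sub>F y in at_right 0. poly (pCons 0 P) (inverse y) * exp (- inverse y)
      = (expinv_poly P y - expinv_poly P 0) / (y - 0)"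
    by (auto simp: expinv_poly_def divide_inverse ac_simps
        intro!: eventually_mono[OF eventually_at_right_less])
  ultimately have R: "((\<lambda>y. (expinv_poly P y - expinv_poly P 0) / (y - 0)) \<longlongrightarrow> 0) (at_right 0)"
    by (rule Lim_transform_eventually)
  have "\<forall>\<^sub>F y in at_left (0::real). 0 = (expinv_poly P y - expinv_poly P 0) / (y - 0)"
    by (rule eventually_mono[OF eventually_at_left_real[of "-1"]]) (auto simp: expinv_poly_def)
  then have L: "((\<lambda>y. (expinv_poly P y - expinv_poly P 0) / (y - 0)) \<longlongrightarrow> 0) (at_left 0)"
    by (rule Lim_transform_eventually[OF tendsto_const])
  show ?thesis
    unfolding has_field_derivative_iff using filterlim_split_at[OF L R] by simp
qed

lemma expinv_poly_has_derivative:
  "(expinv_poly P has_real_derivative expinv_poly ([:0, 0, 1:] * (P - pderiv P)) x) (at x)"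
proof (cases x "0 :: real" rule: linorder_cases)
  case less
  have "((\<lambda>y. 0) has_real_derivative expinv_poly ([:0, 0, 1:] * (P - pderiv P)) x) (at x)"
    using less by (simp add: expinv_poly_def)
  then show ?thesis
    by (rule has_field_derivative_transform_within_open[where S = "{..<0}"])
       (use less in \<open>auto simp: expinv_poly_def\<close>)
next
  case equal
  then show ?thesis using expinv_poly_has_derivative_0[of P] by (simp add: expinv_poly_def)
next
  case greater
  have "((\<lambda>y. poly P (1 / y) * exp (- (1 / y))) has_real_derivative
      poly (pderiv P) (1 / x) * (- (1 / x\<^sup>2)) * exp (- (1 / x))
        + poly P (1 / x) * (exp (- (1 / x)) * (1 / x\<^sup>2))) (at x)"
    using greater by (auto intro!: derivative_eq_intros DERIV_chain2[OF poly_DERIV]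
        simp: power2_eq_square field_simps)
  then have "((\<lambda>y. poly P (1 / y) * exp (- (1 / y))) has_real_derivative
      expinv_poly ([:0, 0, 1:] * (P - pderiv P)) x) (at x)"
    using greater by (simp add: expinv_poly_def field_simps power2_eq_square)
  then show ?thesis
    by (rule has_field_derivative_transform_within_open[where S = "{0<..}"])
       (use greater in \<open>auto simp: expinv_poly_def\<close>)
qed

lemma smooth_fun_expinv_poly: "smooth_fun (expinv_poly P)"
proof -
  have "has_derivs n (expinv_poly P)" for n
  proof (induction n arbitrary: P)
    case (Suc n)
    have "deriv (expinv_poly P) = expinv_poly ([:0, 0, 1:] * (P - pderiv P))"
      by (intro ext DERIV_imp_deriv expinv_poly_has_derivative)
    then show ?case using Suc expinv_poly_has_derivative[of P] by simp
  qed simp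
  then show ?thesis unfolding smooth_fun_def by blast
qed

definition bump :: "real \<Rightarrow> real \<Rightarrow> real \<Rightarrow> real" where
  "bump a b x = expinv_poly 1 (x - a) * expinv_poly 1 (b - x)"

lemma smooth_fun_bump: "smooth_fun (bump a b)"
proof -
  have "smooth_fun (\<lambda>x. expinv_poly 1 (1 * x + - a) * expinv_poly 1 ((- 1) * x + b))"
    by (intro smooth_fun_mult smooth_fun_affine smooth_fun_expinv_poly)
  then show ?thesis unfolding bump_def[abs_def] by simp
qed

lemma bump_pos: "a < x \<Longrightarrow> x < b \<Longrightarrow> 0 < bump a b x"
  by (simp add: bump_def expinv_poly_def)

lemma bump_nonneg: "0 \<le> bump a b x"
  by (simp add: bump_def expinv_poly_def)

lemma bump_eq_0: "x \<notin> {a<..<b} \<Longrightarrow> bump a b x = 0"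
  by (auto simp: bump_def expinv_poly_def)

lemma deriv_bump_eq_0: "x \<notin> {a<..<b} \<Longrightarrow> deriv (bump a b) x = 0"
proof -
  assume x: "x \<notin> {a<..<b}"
  have "\<forall>y. \<bar>x - y\<bar> < 1 \<longrightarrow> bump a b x \<le> bump a b y"
    using bump_eq_0[OF x] bump_nonneg by simp
  then show ?thesis
    using DERIV_local_min[OF smooth_fun_has_derivative[OF smooth_fun_bump] zero_less_one] by blast
qed

lemma continuous_on_compose_fst: "continuous_on UNIV f \<Longrightarrow> continuous_on UNIV (\<lambda>p. f (fst p))"
  by (rule continuous_on_compose2[of UNIV f UNIV fst]) (auto intro: continuous_intros)

lemma continuous_on_compose_snd: "continuous_on UNIV f \<Longrightarrow> continuous_on UNIV (\<lambda>p. f (snd p))"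
  by (rule continuous_on_compose2[of UNIV f UNIV snd]) (auto intro: continuous_intros)

lemma is_partials_product:
  assumes "smooth_fun f" "smooth_fun g"
  shows "is_partials (\<lambda>p. f (fst p) * g (snd p))
     (\<lambda>p. deriv f (fst p) * g (snd p)) (\<lambda>p. f (fst p) * deriv g (snd p))"
  unfolding is_partials_def
  using smooth_fun_has_derivative[OF assms(1)] smooth_fun_has_derivative[OF assms(2)]
  by (auto intro!: derivative_eq_intros)

lemma C_k_product: "smooth_fun f \<Longrightarrow> smooth_fun g \<Longrightarrow> C_k k (\<lambda>p. f (fst p) * g (snd p))"
proof (induction k arbitrary: f g)
  case 0
  then show ?case
    by (simp add: continuous_on_mult continuous_on_compose_fst continuous_on_compose_snd
        smooth_fun_continuous)
next
  case (Suc k)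
  then show ?case
    using is_partials_product[OF Suc.prems] Suc.IH[OF smooth_fun_deriv[OF Suc.prems(1)] Suc.prems(2)]
      Suc.IH[OF Suc.prems(1) smooth_fun_deriv[OF Suc.prems(2)]]
    by auto
qed

lemma test_fun_bump_product:
  assumes "0 < s1" "s2 < T"
  shows "test_fun T (\<lambda>p. bump a1 a2 (fst p) * bump s1 s2 (snd p))"
  unfolding test_fun_def C_inf_def
proof (intro conjI allI exI[of _ "{a1..a2} \<times> {s1..s2}"])
  show "C_k k (\<lambda>p. bump a1 a2 (fst p) * bump s1 s2 (snd p))" for k
    by (intro C_k_product smooth_fun_bump)
  show "compact ({a1..a2} \<times> {s1..s2})" by (intro compact_Times) auto
  show "{a1..a2} \<times> {s1..s2} \<subseteq> Q T" using assms by (auto simp: Q_def)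
  show "p \<notin> {a1..a2} \<times> {s1..s2} \<longrightarrow> bump a1 a2 (fst p) * bump s1 s2 (snd p) = 0" for p
    by (cases p) (auto simp: bump_eq_0)
qed

section \<open>Integrals on the line and in the plane\<close>

lemma integrable_continuous_compact_support:
  fixes f :: "'a::euclidean_space \<Rightarrow> real"
  assumes "continuous_on UNIV f" "compact K" "\<And>x. x \<notin> K \<Longrightarrow> f x = 0"
  shows "integrable lborel f"
proof -
  have "integrable lborel (\<lambda>x. indicator K x *\<^sub>R f x)"
    using borel_integrable_compact[OF assms(2) continuous_on_subset[OF assms(1)]] by simp
  moreover have "(\<lambda>x. indicator K x *\<^sub>R f x) = f"
    by (rule ext) (use assms(3) in \<open>auto simp: indicator_def of_bool_def\<close>)
  ultimately show ?thesis by simp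
qed

lemma lborel_integral_eq_interval_integral:
  fixes f :: "real \<Rightarrow> real"
  assumes "a \<le> b" "\<And>x. x \<notin> {a..b} \<Longrightarrow> f x = 0"
  shows "integral\<^sup>L lborel f = (LBINT x=a..b. f x)"
proof -
  have "(\<lambda>x. indicator {a..b} x *\<^sub>R f x) = f"
    by (rule ext) (use assms(2) in \<open>auto simp: indicator_def of_bool_def\<close>)
  then show ?thesis
    by (simp add: interval_integral_Icc[OF assms(1)] set_lebesgue_integral_def)
qed

lemma lborel_integral_iterated:
  fixes h :: "real \<times> real \<Rightarrow> real"
  assumes "integrable lborel h"
  shows "integral\<^sup>L lborel h = (\<integral>s. (\<integral>x. h (x, s) \<partial>lborel) \<partial>lborel)"
proof -
  have "integrable (lborel \<Otimes>\<^sub>M lborel) (\<lambda>(x, s). h (x, s))"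
    using assms by (simp add: lborel_prod)
  from lborel_pair.integral_snd[OF this] show ?thesis by (simp add: lborel_prod)
qed

lemma null_sets_graph:
  fixes f :: "real \<Rightarrow> real"
  assumes "continuous_on UNIV f"
  shows "{p. fst p = f (snd p)} \<in> null_sets lborel"
proof -
  let ?Z = "{p :: real \<times> real. fst p = f (snd p)}"
  have "closed ?Z"
    by (intro closed_Collect_eq continuous_intros continuous_on_compose_snd assms)
  then have Z0: "?Z \<in> sets lborel" by simp
  then have Z: "?Z \<in> sets (lborel \<Otimes>\<^sub>M lborel)"
    by (simp only: lborel_prod)
  have "(\<lambda>x. (x, y)) -` ?Z = {f y}" for y by auto
  then have "emeasure (lborel \<Otimes>\<^sub>M lborel) ?Z = 0"
    by (simp add: lborel_pair.emeasure_pair_measure_alt2[OF Z])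
  then have "emeasure lborel ?Z = 0" by (simp add: lborel_prod)
  with Z0 show ?thesis by auto
qed

lemma interval_integral_pos:
  fixes f :: "real \<Rightarrow> real"
  assumes "continuous_on {a..b} f" "\<And>x. x \<in> {a..b} \<Longrightarrow> 0 \<le> f x"
    and "z \<in> {a..b}" "0 < f z" "a < b"
  shows "0 < (LBINT x=a..b. f x)"
proof -
  have "(LBINT x=a..b. f x) = integral {a..b} f"
    using assms by (intro interval_integral_eq_integral borel_integrable_atLeastAtMost') auto
  moreover have "integral {a..b} f \<ge> 0"
    using assms by (intro integral_nonneg integrable_continuous_interval) auto
  moreover have "integral {a..b} f \<noteq> 0"
    using assms integral_eq_0_iff[of a b f] by force
  ultimately show ?thesis by simp
qed

lemma interval_integral_bump_weighted_pos:
  fixes f xi :: "real \<Rightarrow> real"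
  assumes "continuous_on {s1..s2} xi" "continuous_on {s1..s2} f" "\<And>s. s \<in> {s1..s2} \<Longrightarrow> 0 < f s"
    and "t \<in> {s1<..<s2}" "xi t \<in> {a1<..<a2}"
  shows "0 < (LBINT s=s1..s2. bump s1 s2 s * (bump a1 a2 (xi s) * f s))"
proof (rule interval_integral_pos[where z = t])
  show "continuous_on {s1..s2} (\<lambda>s. bump s1 s2 s * (bump a1 a2 (xi s) * f s))"
    by (intro continuous_on_mult continuous_on_subset[OF smooth_fun_continuous[OF smooth_fun_bump]]
        continuous_on_compose2[OF smooth_fun_continuous[OF smooth_fun_bump] assms(1)] assms(2)) auto
  show "0 \<le> bump s1 s2 s * (bump a1 a2 (xi s) * f s)" if "s \<in> {s1..s2}" for s
    using assms(3)[OF that] by (simp add: bump_nonneg)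
  show "0 < bump s1 s2 t * (bump a1 a2 (xi t) * f t)"
    using assms(3-5) by (intro mult_pos_pos bump_pos) auto
qed (use assms(4) in auto)

lemma interval_integral_split_at:
  fixes f :: "real \<Rightarrow> real" and a y w :: real
  assumes "continuous_on UNIV f"
  shows "(LBINT s=a..w. f s) = (LBINT s=a..y. f s) + (LBINT s=y..w. f s)"
proof -
  have "interval_lebesgue_integrable lborel (ereal (min a (min y w))) (ereal (max a (max y w))) f"
    by (rule interval_integrable_continuous_on) (use assms in \<open>auto intro: continuous_on_subset\<close>)
  then show ?thesis
    by (subst interval_integral_sum) (auto simp: min_def max_def)
qed

lemma interval_integral_upper_has_derivative:
  fixes f :: "real \<Rightarrow> real" and a :: real
  assumes "continuous_on UNIV f"
  shows "((\<lambda>w :: real. LBINT s=a..w. f s) has_real_derivative f w) (at w)"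
proof -
  define R where "R = \<bar>w\<bar> + \<bar>a\<bar> + 1"
  have "((\<lambda>u. LBINT s=a..u. f s) has_vector_derivative f w) (at w within {-R..R})"
    using assms by (intro interval_integral_FTC2) (auto simp: R_def intro: continuous_on_subset)
  moreover have "-R < w" "w < R" by (auto simp: R_def abs_if)
  then have "at w within {-R..R} = at w" by (intro at_within_interior) simp
  ultimately show ?thesis by (simp add: has_real_derivative_iff_has_vector_derivative)
qed

lemma continuous_on_interval_integral_upper:
  fixes f :: "real \<Rightarrow> real" and a :: real
  assumes "continuous_on UNIV f"
  shows "continuous_on UNIV (\<lambda>w :: real. LBINT s=a..w. f s)"
  by (rule continuous_at_imp_continuous_on) (auto intro: DERIV_isCont interval_integral_upper_has_derivative[OF assms])

lemma lborel_integral_by_parts_compact_support: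
  fixes be be' f f' :: "real \<Rightarrow> real"
  assumes be: "\<And>s. (be has_real_derivative be' s) (at s)" "continuous_on UNIV be'"
      "\<And>s. s \<notin> {s1<..<s2} \<Longrightarrow> be s = 0 \<and> be' s = 0"
    and f: "\<And>s. s \<in> {s1..s2} \<Longrightarrow> (f has_real_derivative f' s) (at s within {s1..s2})"
      "continuous_on {s1..s2} f'"
    and "s1 \<le> s2"
  shows "(\<integral>s. be' s * f s \<partial>lborel) = - (LBINT s=s1..s2. be s * f' s)"
proof -
  have "continuous_on {s1..s2} f"
    using DERIV_continuous[OF f(1)] by (simp add: continuous_on_eq_continuous_within)
  then have c1: "continuous_on {s1..s2} (\<lambda>s. be' s * f s)"
    by (intro continuous_on_mult continuous_on_subset[OF be(2)]) auto
  have "continuous_on UNIV be"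
    using be(1) by (auto intro: continuous_at_imp_continuous_on DERIV_isCont)
  then have c2: "continuous_on {s1..s2} (\<lambda>s. be s * f' s)"
    using continuous_on_mult[OF continuous_on_subset f(2)] by blast
  have "(LBINT s=s1..s2. be' s * f s + be s * f' s) = be s2 * f s2 - be s1 * f s1"
  proof (rule interval_integral_FTC_finite)
    show "continuous_on {min s1 s2..max s1 s2} (\<lambda>s. be' s * f s + be s * f' s)"
      using c1 c2 \<open>s1 \<le> s2\<close> by (simp add: continuous_on_add)
    fix s assume "min s1 s2 \<le> s" "s \<le> max s1 s2"
    then have "s \<in> {s1..s2}" using \<open>s1 \<le> s2\<close> by simp
    from DERIV_mult[OF has_field_derivative_at_within[OF be(1)] f(1)[OF this]]
    show "((\<lambda>s. be s * f s) has_vector_derivative be' s * f s + be s * f' s)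
        (at s within {min s1 s2..max s1 s2})"
      using \<open>s1 \<le> s2\<close> by (simp add: has_real_derivative_iff_has_vector_derivative mult.commute)
  qed
  moreover have "be s1 = 0" "be s2 = 0" using be(3) by auto
  moreover have "(LBINT s=s1..s2. be' s * f s + be s * f' s)
      = (LBINT s=s1..s2. be' s * f s) + (LBINT s=s1..s2. be s * f' s)"
    using \<open>s1 \<le> s2\<close> c1 c2
    by (intro interval_lebesgue_integral_add(2) interval_integrable_continuous_on) auto
  moreover have "(\<integral>s. be' s * f s \<partial>lborel) = (LBINT s=s1..s2. be' s * f s)"
    using \<open>s1 \<le> s2\<close> be(3) by (intro lborel_integral_eq_interval_integral) auto
  ultimately show ?thesis by simp
qed

lemma integral_step_mult:
  fixes al :: "real \<Rightarrow> real"
  assumes "continuous_on UNIV al" "\<And>x. x \<notin> {a1..a2} \<Longrightarrow> al x = 0" "a1 \<le> y"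
  shows "(\<integral>x. (C + D * indicator {y<..} x) * al x \<partial>lborel)
    = (C + D) * (\<integral>x. al x \<partial>lborel) - D * (LBINT x=a1..y. al x)"
proof -
  have al: "integrable lborel al"
    using assms by (intro integrable_continuous_compact_support[of _ "{a1..a2}"]) auto
  have "(\<lambda>x. (C + D * indicator {y<..} x) * al x)
      = (\<lambda>x. (C + D) * al x - D * (indicator {a1..y} x * al x))"
  proof
    fix x show "(C + D * indicator {y<..} x) * al x = (C + D) * al x - D * (indicator {a1..y} x * al x)"
      using assms(2)[of x] \<open>a1 \<le> y\<close>
      by (cases "x < a1"; cases "x \<le> y") (auto simp: indicator_def algebra_simps)
  qed
  moreover have "(\<integral>x. indicator {a1..y} x * al x \<partial>lborel) = (LBINT x=a1..y. al x)"
    using interval_integral_Icc[OF \<open>a1 \<le> y\<close>, of al] by (simp add: set_lebesgue_integral_def)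
  moreover have "integrable lborel (\<lambda>x. D * (indicator {a1..y} x * al x))"
    using integrable_mult_indicator[OF _ al, of "{a1..y}"] by simp
  ultimately show ?thesis
    using Bochner_Integration.integral_diff[OF integrable_mult_right[OF al]] by simp
qed

lemma integral_graph_step_iterated:
  fixes al be' xi :: "real \<Rightarrow> real" and C D :: real
  assumes al: "continuous_on UNIV al" "\<And>x. x \<notin> {a1..a2} \<Longrightarrow> al x = 0"
    and be': "continuous_on UNIV be'" "\<And>s. s \<notin> {s1..s2} \<Longrightarrow> be' s = 0"
    and xi: "continuous_on UNIV xi" "\<And>s. a1 \<le> xi s"
  shows "(\<integral>p. (C + D * indicator {p. xi (snd p) < fst p} p) * (al (fst p) * be' (snd p)) \<partial>lborel)
    = (\<integral>s. be' s * ((C + D) * (\<integral>x. al x \<partial>lborel) - D * (LBINT x=a1..xi s. al x)) \<partial>lborel)"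
proof -
  define S where "S = {p :: real \<times> real. xi (snd p) < fst p}"
  have "al x * be' s = 0" if "(x, s) \<notin> {a1..a2} \<times> {s1..s2}" for x s
    using that al(2)[of x] be'(2)[of s] by auto
  then have psit: "integrable lborel (\<lambda>p. al (fst p) * be' (snd p))"
    by (intro integrable_continuous_compact_support[of _ "{a1..a2} \<times> {s1..s2}"]
        continuous_on_mult continuous_on_compose_fst continuous_on_compose_snd al(1) be'(1)
        compact_Times compact_Icc) (metis prod.collapse)
  have "open S"
    unfolding S_def by (intro open_Collect_less continuous_on_compose_snd xi(1) continuous_intros)
  then have "integrable lborel (\<lambda>p. (C + D * indicator S p) * (al (fst p) * be' (snd p)))"
    using integrable_mult_indicator[OF _ psit, of S] psit by (simp add: distrib_right mult.assoc)
  then have "(\<integral>p. (C + D * indicator S p) * (al (fst p) * be' (snd p)) \<partial>lborel)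
      = (\<integral>s. (\<integral>x. (C + D * indicator {xi s<..} x) * al x \<partial>lborel) * be' s \<partial>lborel)"
    by (subst lborel_integral_iterated)
      (simp_all add: S_def indicator_def integral_mult_left_zero[symmetric] mult.assoc)
  also have "\<dots> = (\<integral>s. be' s * ((C + D) * (\<integral>x. al x \<partial>lborel) - D * (LBINT x=a1..xi s. al x)) \<partial>lborel)"
  proof (rule Bochner_Integration.integral_cong)
    fix s
    have "(\<integral>x. (C + D * indicator {xi s<..} x) * al x \<partial>lborel)
        = (C + D) * (\<integral>x. al x \<partial>lborel) - D * (LBINT x=a1..xi s. al x)"
      by (rule integral_step_mult[OF al xi(2)])
    then show "(\<integral>x. (C + D * indicator {xi s<..} x) * al x \<partial>lborel) * be' s
        = be' s * ((C + D) * (\<integral>x. al x \<partial>lborel) - D * (LBINT x=a1..xi s. al x))"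
      by (simp only: mult.commute)
  qed simp
  finally show ?thesis unfolding S_def .
qed

text \<open>Integrating by parts in time moves the derivative from the test function to the interface.\<close>
lemma integral_interface_jump:
  fixes al be be' xi xi' :: "real \<Rightarrow> real" and C D :: real
  assumes al: "continuous_on UNIV al" "\<And>x. x \<notin> {a1..a2} \<Longrightarrow> al x = 0"
    and be: "\<And>s. (be has_real_derivative be' s) (at s)" "continuous_on UNIV be'"
      "\<And>s. s \<notin> {s1<..<s2} \<Longrightarrow> be s = 0 \<and> be' s = 0"
    and xi: "continuous_on UNIV xi" "\<And>s. a1 < xi s \<and> xi s < a2"
      "\<And>s. s \<in> {s1..s2} \<Longrightarrow> (xi has_real_derivative xi' s) (at s within {s1..s2})"
      "continuous_on {s1..s2} xi'"
    and "s1 \<le> s2"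
  shows "(\<integral>p. (C + D * indicator {p. xi (snd p) < fst p} p) * (al (fst p) * be' (snd p)) \<partial>lborel)
    = D * (LBINT s=s1..s2. be s * (al (xi s) * xi' s))"
proof -
  define J where "J = (\<integral>x. al x \<partial>lborel)"
  define K where "K y = (LBINT x=a1..y. al x)" for y :: real
  have K_deriv: "(K has_real_derivative al y) (at y)" for y
    unfolding K_def by (rule interval_integral_upper_has_derivative[OF al(1)])
  have integrable: "integrable lborel (\<lambda>s. be' s * f s)" if "continuous_on UNIV f" for f
    using be(3) by (intro integrable_continuous_compact_support[of _ "{s1..s2}"]
        continuous_on_mult be(2) that) auto
  have "continuous_on UNIV K"
    by (rule continuous_at_imp_continuous_on) (auto intro: DERIV_isCont K_deriv)
  then have "continuous_on UNIV (\<lambda>s. D * K (xi s))"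
    by (intro continuous_on_mult continuous_on_const continuous_on_compose2[OF _ xi(1)]) auto
  moreover have "(\<integral>s. be' s * ((C + D) * J) \<partial>lborel) = 0"
    using lborel_integral_by_parts_compact_support[OF be, where f = "\<lambda>_. (C + D) * J" and f' = "\<lambda>_. 0"]
      \<open>s1 \<le> s2\<close>
    by simp
  moreover have "(\<integral>s. be' s * (D * K (xi s)) \<partial>lborel)
      = - D * (LBINT s=s1..s2. be s * (al (xi s) * xi' s))"
  proof -
    have "((\<lambda>s. K (xi s)) has_real_derivative al (xi s) * xi' s) (at s within {s1..s2})"
      if "s \<in> {s1..s2}" for s
      by (rule DERIV_chain2[OF K_deriv xi(3)[OF that]])
    moreover have "continuous_on {s1..s2} (\<lambda>s. al (xi s) * xi' s)"
      by (intro continuous_on_mult continuous_on_compose2[OF al(1)] continuous_on_subset[OF xi(1)]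
          xi(4)) auto
    ultimately show ?thesis
      using lborel_integral_by_parts_compact_support[OF be _ _ \<open>s1 \<le> s2\<close>,
          where f = "\<lambda>s. D * K (xi s)" and f' = "\<lambda>s. D * (al (xi s) * xi' s)"]
      by (simp add: DERIV_cmult continuous_on_mult_left interval_lebesgue_integral_mult_right algebra_simps)
  qed
  moreover have "(\<integral>p. (C + D * indicator {p. xi (snd p) < fst p} p) * (al (fst p) * be' (snd p)) \<partial>lborel)
      = (\<integral>s. be' s * ((C + D) * J) - be' s * (D * K (xi s)) \<partial>lborel)"
  proof -
    have "a1 \<le> xi s" for s using xi(2)[of s] by simp
    then show ?thesis
      unfolding J_def K_def using al be(2,3) xi(1)
      by (subst integral_graph_step_iterated[of al a1 a2 be' s1 s2]) (auto simp: algebra_simps)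
  qed
  ultimately show ?thesis
    using Bochner_Integration.integral_diff[OF integrable integrable, of "\<lambda>_. (C + D) * J"] by simp
qed

section \<open>Functions of cubic type and the cutoff entropy\<close>

lemma cubic_type_continuous:
  assumes "cubic_type phi b c"
  shows "continuous_on UNIV phi"
proof (rule continuous_at_imp_continuous_on, intro ballI)
  fix x :: real
  obtain L where "L-lipschitz_on (cball x 1) phi"
    using assms unfolding cubic_type_def by (meson compact_cball)
  then have "continuous_on (cball x 1) phi" by (rule lipschitz_on_continuous_on)
  then show "isCont phi x" by (rule continuous_on_interior) simp
qed

lemma cubic_type_decreasing:
  "cubic_type phi b c \<Longrightarrow> b \<le> x \<Longrightarrow> x \<le> y \<Longrightarrow> y \<le> c \<Longrightarrow> phi y \<le> phi x"
  unfolding cubic_type_def monotone_on_def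
  by (metis atLeastAtMost_iff dual_order.refl dual_order.trans nless_le)

lemma cubic_type_increasing:
  "cubic_type phi b c \<Longrightarrow> c \<le> x \<Longrightarrow> x \<le> y \<Longrightarrow> phi x \<le> phi y"
  unfolding cubic_type_def monotone_on_def by (metis atLeast_iff dual_order.refl dual_order.trans nless_le)

lemma cubic_type_surj_right_branch:
  assumes phi: "cubic_type phi b c" and "phi c \<le> y"
  obtains x where "c \<le> x" "phi x = y"
proof -
  have "\<forall>\<^sub>F x in at_top. y \<le> phi x"
    using phi by (simp add: cubic_type_def filterlim_at_top)
  then obtain M where M: "\<And>x. M \<le> x \<Longrightarrow> y \<le> phi x" by (auto simp: eventually_at_top_linorder)
  have "\<exists>x. c \<le> x \<and> x \<le> max M c \<and> phi x = y"
    using M[of "max M c"] assms cubic_type_continuous[OF phi]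
    by (intro IVT) (auto simp: continuous_on_eq_continuous_at)
  then show ?thesis using that by blast
qed

lemma beta0_mem:
  assumes phi: "cubic_type phi b c" and "y \<in> {phi c..phi b}"
  shows "beta0 phi b c y \<in> {b..c}" "phi (beta0 phi b c y) = y"
proof -
  have "inj_on phi {b..c}"
  proof (rule inj_onI)
    fix x z assume "x \<in> {b..c}" "z \<in> {b..c}" "phi x = phi z"
    with phi show "x = z"
      unfolding cubic_type_def monotone_on_def by (metis less_irrefl linorder_neqE_linordered_idom)
  qed
  moreover have "y \<in> phi ` {b..c}"
    using assms cubic_type_continuous[OF phi] IVT2[of phi c y b]
    by (force simp: cubic_type_def continuous_on_eq_continuous_at)
  ultimately show "beta0 phi b c y \<in> {b..c}" "phi (beta0 phi b c y) = y"
    unfolding beta0_def by (auto simp: the_inv_into_f_f the_inv_into_into)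
qed

lemma beta2_mem:
  assumes phi: "cubic_type phi b c" and "phi c \<le> y"
  shows "c \<le> beta2 phi c y" "phi (beta2 phi c y) = y"
proof -
  have "inj_on phi {c..}"
    using phi unfolding cubic_type_def by (auto intro: strict_mono_on_imp_inj_on)
  moreover have "y \<in> phi ` {c..}"
    using cubic_type_surj_right_branch[OF assms] by (metis atLeast_iff image_eqI)
  ultimately show "c \<le> beta2 phi c y" "phi (beta2 phi c y) = y"
    unfolding beta2_def using the_inv_into_into[of phi "{c..}" y] by (auto simp: the_inv_into_f_f)
qed

definition entropy_cutoff :: "real \<Rightarrow> real \<Rightarrow> real" where
  "entropy_cutoff m y = - (max (m - y) 0)\<^sup>2"

definition entropy_cutoff_deriv :: "real \<Rightarrow> real \<Rightarrow> real" where
  "entropy_cutoff_deriv m y = 2 * max (m - y) 0"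

lemma entropy_cutoff_has_derivative:
  "(entropy_cutoff m has_real_derivative entropy_cutoff_deriv m y) (at y)"
proof (cases y m rule: linorder_cases)
  case less
  have "((\<lambda>y. - (m - y)\<^sup>2) has_real_derivative 2 * max (m - y) 0) (at y)"
    using less by (auto intro!: derivative_eq_intros simp: power2_eq_square)
  then show ?thesis
    unfolding entropy_cutoff_deriv_def
    by (rule has_field_derivative_transform_within_open[where S = "{..<m}"])
       (use less in \<open>auto simp: entropy_cutoff_def\<close>)
next
  case greater
  have "((\<lambda>y. 0) has_real_derivative 2 * max (m - y) 0) (at y)"
    using greater by simp
  then show ?thesis
    unfolding entropy_cutoff_deriv_def
    by (rule has_field_derivative_transform_within_open[where S = "{m<..}"])
       (use greater in \<open>auto simp: entropy_cutoff_def\<close>)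
next
  case equal
  have quotient: "(entropy_cutoff m z - entropy_cutoff m m) / (z - m) = max (m - z) 0"
    if "z \<noteq> m" for z
    using that by (cases "z < m") (auto simp: entropy_cutoff_def power2_eq_square field_simps)
  have "\<forall>z. norm ((entropy_cutoff m z - entropy_cutoff m m) / (z - m)) \<le> \<bar>z - m\<bar>"
  proof
    fix z show "norm ((entropy_cutoff m z - entropy_cutoff m m) / (z - m)) \<le> \<bar>z - m\<bar>"
      using quotient[of z] by (cases "z = m") auto
  qed
  moreover have "((\<lambda>z. \<bar>z - m\<bar>) \<longlongrightarrow> 0) (at m)"
    by (rule tendsto_eq_intros refl)+ simp
  ultimately have "((\<lambda>z. (entropy_cutoff m z - entropy_cutoff m m) / (z - m)) \<longlongrightarrow> 0) (at m)"
    by (rule Lim_null_comparison[OF always_eventually])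
  with equal show ?thesis
    unfolding has_field_derivative_iff entropy_cutoff_deriv_def by simp
qed

lemma continuous_on_entropy_cutoff_comp:
  assumes "continuous_on UNIV f"
  shows "continuous_on UNIV (\<lambda>s. entropy_cutoff m (f s))"
  unfolding entropy_cutoff_def by (intro continuous_intros assms)

lemma continuous_on_entropy_cutoff_deriv: "continuous_on UNIV (entropy_cutoff_deriv m)"
  unfolding entropy_cutoff_deriv_def by (intro continuous_intros)

lemma entropy_cutoff_deriv_nonneg: "0 \<le> entropy_cutoff_deriv m y"
  by (simp add: entropy_cutoff_deriv_def)

lemma entropy_cutoff_eq_0: "m \<le> y \<Longrightarrow> entropy_cutoff m y = 0"
  and entropy_cutoff_deriv_eq_0: "m \<le> y \<Longrightarrow> entropy_cutoff_deriv m y = 0"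
  by (simp_all add: entropy_cutoff_def entropy_cutoff_deriv_def)

text \<open>The cutoff vanishes where \<open>\<phi> \<ge> m\<close>, so \<open>G\<close> is constant on each phase there; the jump between
  the phases is the integral of the cutoff over \<open>[b, r]\<close> with \<open>\<phi>(r) = m\<close>, negative since \<open>\<phi>(c) < m\<close>.\<close>
lemma cubic_entropy_flux_jump:
  assumes phi: "cubic_type phi b c" and "phi c < m"
  defines "G w \<equiv> LBINT s=0..w. entropy_cutoff m (phi s)"
  obtains Gl Gr where "Gr < Gl"
    "\<And>w. w \<in> {b..c} \<Longrightarrow> m \<le> phi w \<Longrightarrow> G w = Gl"
    "\<And>w. c \<le> w \<Longrightarrow> m \<le> phi w \<Longrightarrow> G w = Gr"
proof -
  have cont: "continuous_on UNIV (\<lambda>s. entropy_cutoff m (phi s))"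
    by (rule continuous_on_entropy_cutoff_comp[OF cubic_type_continuous[OF phi]])
  have G_eq: "G w = G y" if "y \<le> w" "\<And>s. s \<in> {y..w} \<Longrightarrow> m \<le> phi s" for y w
  proof -
    have "(LBINT s=y..w. entropy_cutoff m (phi s)) = (LBINT s=y..w. 0)"
      using that by (intro interval_integral_cong) (auto simp: entropy_cutoff_eq_0)
    then show ?thesis
      unfolding G_def using interval_integral_split_at[OF cont, of 0 w y] by (simp add: zero_ereal_def)
  qed
  obtain r where r: "c \<le> r" "phi r = m"
    using cubic_type_surj_right_branch[OF phi] \<open>phi c < m\<close> by (metis less_imp_le)
  have "c < r" using r \<open>phi c < m\<close> by (cases "c = r") auto
  have "b < c" using phi by (simp add: cubic_type_def)
  show ?thesis
  proof
    have "0 < (LBINT s=b..r. - entropy_cutoff m (phi s))"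
      using cont \<open>b < c\<close> \<open>c < r\<close> \<open>phi c < m\<close>
      by (intro interval_integral_pos[where z = c] continuous_on_minus continuous_on_subset[OF cont])
         (auto simp: entropy_cutoff_def)
    then show "G r < G b"
      unfolding G_def using interval_integral_split_at[OF cont, of 0 r b]
      by (simp add: zero_ereal_def interval_lebesgue_integral_uminus)
    show "G w = G b" if "w \<in> {b..c}" "m \<le> phi w" for w
      using that cubic_type_decreasing[OF phi] by (intro G_eq) (auto intro: order_trans)
    show "G w = G r" if "c \<le> w" "m \<le> phi w" for w
    proof (rule G_eq)
      show "r \<le> w"
        using phi that r unfolding cubic_type_def monotone_on_def by (meson atLeast_iff leD leI)
      show "m \<le> phi s" if "s \<in> {r..w}" for s
        using that r cubic_type_increasing[OF phi, of r s] by auto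
    qed
  qed
qed

section \<open>The interface of a two-phase solution\<close>

lemma eventually_nhds_closed_interval:
  fixes t :: real
  assumes "eventually P (nhds t)" "0 < r"
  obtains e where "0 < e" "e \<le> r" "\<And>s. s \<in> {t - e..t + e} \<Longrightarrow> P s"
proof -
  obtain d where "0 < d" "\<And>s. dist s t \<le> d \<Longrightarrow> P s"
    using assms(1) unfolding eventually_nhds_metric_le by blast
  show ?thesis
  proof (rule that[of "min d r"])
    fix s assume "s \<in> {t - min d r..t + min d r}"
    then have "dist s t \<le> d" by (auto simp: dist_real_def abs_le_iff)
    then show "P s" by fact
  qed (use \<open>0 < d\<close> \<open>0 < r\<close> in auto)
qed

lemma dist_Pair_le_add: "dist (a, b) (c, d) \<le> dist a c + dist b d"
  unfolding dist_Pair_Pair by (rule sqrt_sum_squares_le_sum_abs[THEN order_trans]) simp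

lemma continuous_extension_tendsto_unique:
  fixes w v :: "'a::topological_space \<Rightarrow> 'b::t2_space"
  assumes w: "continuous_on (closure S) w" "\<And>p. p \<in> S \<Longrightarrow> w p = v p"
    and f: "(f \<longlongrightarrow> p0) F" "\<forall>\<^sub>F x in F. f x \<in> S" "F \<noteq> bot"
    and lim: "((\<lambda>x. v (f x)) \<longlongrightarrow> L) F"
  shows "p0 \<in> closure S" "w p0 = L"
proof -
  have "\<forall>\<^sub>F x in F. f x \<in> closure S"
    using f(2) by (rule eventually_mono) (use closure_subset in blast)
  moreover show "p0 \<in> closure S"
    by (rule Lim_in_closed_set[OF closed_closure calculation f(3,1)])
  ultimately have "((\<lambda>x. w (f x)) \<longlongrightarrow> w p0) F"
    by (intro continuous_on_tendsto_compose[OF w(1) f(1)])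
  moreover have "((\<lambda>x. w (f x)) \<longlongrightarrow> L) F"
    using lim by (rule Lim_transform_eventually) (use f(2) in \<open>rule eventually_mono, simp add: w(2)\<close>)
  ultimately show "w p0 = L" by (rule tendsto_unique[OF f(3)])
qed

lemma two_phase_interface_neighbourhood:
  fixes u v :: "real \<times> real \<Rightarrow> real" and xi :: "real \<Rightarrow> real"
  assumes sol: "two_phase_solution phi b c T u0 u v xi" and "0 < t" "t < T" and "m < v (xi t, t)"
  obtains r where "0 < r" "\<And>p. p \<in> V1 T xi \<union> V2 T xi \<Longrightarrow> dist p (xi t, t) < r \<Longrightarrow> m < v p"
proof -
  obtain w1 w2 where w1: "continuous_on (closure (V1 T xi)) w1" "\<And>p. p \<in> V1 T xi \<Longrightarrow> w1 p = v p"
    and w2: "continuous_on (closure (V2 T xi)) w2" "\<And>p. p \<in> V2 T xi \<Longrightarrow> w2 p = v p"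
    and "\<forall>t\<in>{0<..<T}. ((\<lambda>d. v (xi t + d, t)) \<longlongrightarrow> v (xi t, t)) (at_right 0) \<and>
                      ((\<lambda>d. v (xi t + d, t)) \<longlongrightarrow> v (xi t, t)) (at_left 0)"
    using sol unfolding two_phase_solution_def by (elim exE conjE) blast
  then have lim: "((\<lambda>d. v (xi t + d, t)) \<longlongrightarrow> v (xi t, t)) (at_left 0)"
    "((\<lambda>d. v (xi t + d, t)) \<longlongrightarrow> v (xi t, t)) (at_right 0)"
    using \<open>0 < t\<close> \<open>t < T\<close> by auto
  define p0 where "p0 = (xi t, t)"
  have "((\<lambda>d. (xi t + d, t)) \<longlongrightarrow> (xi t + 0, t)) (at 0 within A)" for A
    by (intro tendsto_Pair tendsto_add tendsto_const tendsto_ident_at)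
  then have path: "((\<lambda>d. (xi t + d, t)) \<longlongrightarrow> p0) (at 0 within A)" for A
    by (simp add: p0_def)
  have "\<forall>\<^sub>F d in at_left 0. (xi t + d, t) \<in> V1 T xi"
    by (rule eventually_mono[OF eventually_at_left_real[of "-1"]]) (use assms in \<open>auto simp: V1_def\<close>)
  then have "p0 \<in> closure (V1 T xi)" "w1 p0 = v p0"
    using continuous_extension_tendsto_unique[OF w1 path] lim(1) by (simp_all add: p0_def)
  have "\<forall>\<^sub>F d in at_right 0. (xi t + d, t) \<in> V2 T xi"
    by (rule eventually_mono[OF eventually_at_right_real[of _ 1]]) (use assms in \<open>auto simp: V2_def\<close>)
  then have "p0 \<in> closure (V2 T xi)" "w2 p0 = v p0"
    using continuous_extension_tendsto_unique[OF w2 path] lim(2) by (simp_all add: p0_def)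
  have "m < v p0" using \<open>m < v (xi t, t)\<close> by (simp add: p0_def)
  obtain r1 where "0 < r1" and r1: "\<forall>p\<in>closure (V1 T xi). dist p p0 < r1 \<longrightarrow> dist (w1 p) (w1 p0) < v p0 - m"
    using w1(1) \<open>p0 \<in> closure (V1 T xi)\<close> \<open>m < v p0\<close> unfolding continuous_on_iff
    by (meson diff_gt_0_iff_gt)
  obtain r2 where "0 < r2" and r2: "\<forall>p\<in>closure (V2 T xi). dist p p0 < r2 \<longrightarrow> dist (w2 p) (w2 p0) < v p0 - m"
    using w2(1) \<open>p0 \<in> closure (V2 T xi)\<close> \<open>m < v p0\<close> unfolding continuous_on_iff
    by (meson diff_gt_0_iff_gt)
  show ?thesis
  proof (rule that[of "min r1 r2"])
    show "0 < min r1 r2" using \<open>0 < r1\<close> \<open>0 < r2\<close> by simp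
    fix p assume p: "p \<in> V1 T xi \<union> V2 T xi" "dist p (xi t, t) < min r1 r2"
    then have "dist (v p) (v p0) < v p0 - m"
      using r1 r2 w1(2) w2(2) closure_subset \<open>w1 p0 = v p0\<close> \<open>w2 p0 = v p0\<close>
      unfolding p0_def by (metis Un_iff min_less_iff_conj subsetD)
    then show "m < v p" by (simp add: dist_real_def)
  qed
qed

lemma two_phase_solution_interface_C1:
  assumes "two_phase_solution phi b c T u0 u v xi"
  obtains dxi where "\<And>t. t \<in> {0<..<T} \<Longrightarrow> (xi has_real_derivative dxi t) (at t)"
    "continuous_on {0..T} dxi" "continuous_on {0..T} xi"
proof -
  obtain dxi where dxi: "\<And>t. t \<in> {0..T} \<Longrightarrow> (xi has_real_derivative dxi t) (at t within {0..T})"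
    "continuous_on {0..T} dxi"
    using assms unfolding two_phase_solution_def by (elim exE conjE) blast
  show ?thesis
  proof (rule that[OF _ dxi(2)])
    show "(xi has_real_derivative dxi t) (at t)" if "t \<in> {0<..<T}" for t
      using dxi(1)[of t] that at_within_interior[of t "{0..T}"] by auto
    show "continuous_on {0..T} xi"
      using DERIV_continuous[OF dxi(1)] by (simp add: continuous_on_eq_continuous_within)
  qed
qed

lemma entropy_integrand_measurable:
  fixes u v vx psi psix psit :: "real \<times> real \<Rightarrow> real"
  assumes "Linf_Q T u" "weak_regularity T v vx"
    and G: "continuous_on UNIV G" "G 0 = 0" and g: "continuous_on UNIV g" "continuous_on UNIV dg"
    and psi: "psi \<in> borel_measurable lborel" "psix \<in> borel_measurable lborel"
      "psit \<in> borel_measurable lborel"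
  shows "(\<lambda>p. indicator (Q T) p * (G (u p) * psit p - g (v p) * vx p * psix p
    - dg (v p) * (vx p)\<^sup>2 * psi p)) \<in> borel_measurable lborel"
proof -
  define U where "U p = indicator (Q T) p * u p" for p
  define V where "V p = indicator (Q T) p * v p" for p
  define Vx where "Vx p = indicator (Q T) p * vx p" for p
  have U: "U \<in> borel_measurable lborel" and V: "V \<in> borel_measurable lborel"
    and Vx: "Vx \<in> borel_measurable lborel"
    using assms(1,2) unfolding U_def[abs_def] V_def[abs_def] Vx_def[abs_def]
      Linf_Q_def weak_regularity_def set_borel_measurable_def by auto
  have "(\<lambda>p. G (U p) * psit p - g (V p) * Vx p * psix p - dg (V p) * (Vx p)\<^sup>2 * psi p)
      \<in> borel_measurable lborel"
    by (intro borel_measurable_diff borel_measurable_times borel_measurable_power Vx psi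
        borel_measurable_continuous_on[OF G(1) U] borel_measurable_continuous_on[OF _ V] g)
  moreover have "(\<lambda>p. indicator (Q T) p * (G (u p) * psit p - g (v p) * vx p * psix p
      - dg (v p) * (vx p)\<^sup>2 * psi p))
    = (\<lambda>p. G (U p) * psit p - g (V p) * Vx p * psix p - dg (V p) * (Vx p)\<^sup>2 * psi p)"
    by (rule ext) (simp add: U_def V_def Vx_def indicator_def G(2))
  ultimately show ?thesis by simp
qed

text \<open>Where \<open>v > m\<close> the cutoff and its derivative vanish, so off the interface only the flux term
  survives, and there \<open>G(u)\<close> takes the value of the phase.\<close>
lemma cutoff_entropy_integrand_ae_eq:
  fixes u v vx psi psix psit :: "real \<times> real \<Rightarrow> real" and xi xc :: "real \<Rightarrow> real"
  assumes phi: "cubic_type phi b c"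
    and phase1: "AE p in lborel. p \<in> V1 T xi \<longrightarrow> v p \<in> {phi c..phi b} \<and> u p = beta0 phi b c (v p)"
    and phase2: "AE p in lborel. p \<in> V2 T xi \<longrightarrow> phi c \<le> v p \<and> u p = beta2 phi c (v p)"
    and G: "\<And>w. w \<in> {b..c} \<Longrightarrow> m \<le> phi w \<Longrightarrow> G w = Gl" "\<And>w. c \<le> w \<Longrightarrow> m \<le> phi w \<Longrightarrow> G w = Gr"
    and box: "0 < s1" "s2 < T" "continuous_on UNIV xc" "\<And>s. s \<in> {s1..s2} \<Longrightarrow> xc s = xi s"
    and above: "\<And>x s. x \<in> {a1..a2} \<Longrightarrow> s \<in> {s1..s2} \<Longrightarrow> x \<noteq> xi s \<Longrightarrow> m < v (x, s)"
    and support: "\<And>p. p \<notin> {a1<..<a2} \<times> {s1<..<s2} \<Longrightarrow> psi p = 0 \<and> psix p = 0 \<and> psit p = 0"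
  shows "AE p in lborel. indicator (Q T) p * (G (u p) * psit p - entropy_cutoff m (v p) * vx p * psix p
      - entropy_cutoff_deriv m (v p) * (vx p)\<^sup>2 * psi p)
    = (Gl + (Gr - Gl) * indicator {p. xc (snd p) < fst p} p) * psit p"
  using phase1 phase2 AE_not_in[OF null_sets_graph[OF box(3)]]
proof eventually_elim
  case (elim p)
  obtain x s where p: "p = (x, s)" by (cases p)
  show ?case
  proof (cases "p \<in> {a1<..<a2} \<times> {s1<..<s2}")
    case False
    then show ?thesis using support[OF False] by simp
  next
    case True
    then have s: "s \<in> {s1..s2}" and x: "x \<in> {a1..a2}" by (auto simp: p)
    have "p \<in> Q T" using box s by (simp add: p Q_def)
    have "x \<noteq> xi s" using elim(3) box(4)[OF s] by (simp add: p)
    then have "m < v p" using above[OF x s] by (simp add: p)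
    have "G (u p) = Gl + (Gr - Gl) * indicator {p. xc (snd p) < fst p} p"
    proof (cases "x < xi s")
      case True
      then have "p \<in> V1 T xi" "\<not> xc s < x" using box s by (auto simp: p V1_def)
      then show ?thesis using elim(1) beta0_mem[OF phi] G(1) \<open>m < v p\<close> by (auto simp: p)
    next
      case False
      then have "p \<in> V2 T xi" "xc s < x" using box s \<open>x \<noteq> xi s\<close> by (auto simp: p V2_def)
      then show ?thesis using elim(2) beta2_mem[OF phi] G(2) \<open>m < v p\<close> by (auto simp: p)
    qed
    with \<open>p \<in> Q T\<close> \<open>m < v p\<close> show ?thesis
      by (simp add: entropy_cutoff_eq_0 entropy_cutoff_deriv_eq_0)
  qed
qed

lemma continuous_extension_clamp:
  fixes xi dxi :: "real \<Rightarrow> real"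
  assumes "\<And>s. s \<in> {s1..s2} \<Longrightarrow> (xi has_real_derivative dxi s) (at s within {s1..s2})" "s1 \<le> s2"
  obtains xc where "continuous_on UNIV xc" "\<And>s. s \<in> {s1..s2} \<Longrightarrow> xc s = xi s"
    "\<And>s. \<exists>s'\<in>{s1..s2}. xc s = xi s'"
    "\<And>s. s \<in> {s1..s2} \<Longrightarrow> (xc has_real_derivative dxi s) (at s within {s1..s2})"
proof
  define xc where "xc s = xi (max s1 (min s2 s))" for s
  show xc_eq: "xc s = xi s" if "s \<in> {s1..s2}" for s
    using that by (simp add: xc_def)
  show "\<exists>s'\<in>{s1..s2}. xc s = xi s'" for s
    using assms(2) by (auto simp: xc_def)
  have "continuous_on {s1..s2} xi"
    using DERIV_continuous[OF assms(1)] by (simp add: continuous_on_eq_continuous_within)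
  moreover have "continuous_on UNIV (\<lambda>s. max s1 (min s2 s))" by (intro continuous_intros)
  ultimately show "continuous_on UNIV xc"
    unfolding xc_def[abs_def] by (rule continuous_on_compose2) (use assms(2) in auto)
  show "(xc has_real_derivative dxi s) (at s within {s1..s2})" if "s \<in> {s1..s2}" for s
    by (rule has_field_derivative_transform_within[OF assms(1)[OF that] zero_less_one that])
      (simp add: xc_eq)
qed

lemma cutoff_entropy_bump_integral:
  fixes u v vx :: "real \<times> real \<Rightarrow> real" and xi dxi :: "real \<Rightarrow> real"
  assumes phi: "cubic_type phi b c" and reg: "Linf_Q T u" "weak_regularity T v vx"
    and phase1: "AE p in lborel. p \<in> V1 T xi \<longrightarrow> v p \<in> {phi c..phi b} \<and> u p = beta0 phi b c (v p)"
    and phase2: "AE p in lborel. p \<in> V2 T xi \<longrightarrow> phi c \<le> v p \<and> u p = beta2 phi c (v p)"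
    and G: "continuous_on UNIV G" "G 0 = 0"
      "\<And>w. w \<in> {b..c} \<Longrightarrow> m \<le> phi w \<Longrightarrow> G w = Gl" "\<And>w. c \<le> w \<Longrightarrow> m \<le> phi w \<Longrightarrow> G w = Gr"
    and dxi: "\<And>t. t \<in> {0<..<T} \<Longrightarrow> (xi has_real_derivative dxi t) (at t)" "continuous_on {0..T} dxi"
    and box: "0 < s1" "s1 < s2" "s2 < T" "\<And>s. s \<in> {s1..s2} \<Longrightarrow> xi s \<in> {a1<..<a2}"
    and above: "\<And>x s. x \<in> {a1..a2} \<Longrightarrow> s \<in> {s1..s2} \<Longrightarrow> x \<noteq> xi s \<Longrightarrow> m < v (x, s)"
  shows "(\<integral>p. indicator (Q T) p * (G (u p) * (bump a1 a2 (fst p) * deriv (bump s1 s2) (snd p))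
      - entropy_cutoff m (v p) * vx p * (deriv (bump a1 a2) (fst p) * bump s1 s2 (snd p))
      - entropy_cutoff_deriv m (v p) * (vx p)\<^sup>2 * (bump a1 a2 (fst p) * bump s1 s2 (snd p))) \<partial>lborel)
    = (Gr - Gl) * (LBINT s=s1..s2. bump s1 s2 s * (bump a1 a2 (xi s) * dxi s))"
    (is "integral\<^sup>L lborel ?F = _")
proof -
  define psi where "psi p = bump a1 a2 (fst p) * bump s1 s2 (snd p)" for p :: "real \<times> real"
  define psix where "psix p = deriv (bump a1 a2) (fst p) * bump s1 s2 (snd p)" for p :: "real \<times> real"
  define psit where "psit p = bump a1 a2 (fst p) * deriv (bump s1 s2) (snd p)" for p :: "real \<times> real"
  have "continuous_on UNIV psi" "continuous_on UNIV psix" "continuous_on UNIV psit"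
    unfolding psi_def[abs_def] psix_def[abs_def] psit_def[abs_def]
    by (intro continuous_on_mult continuous_on_compose_fst continuous_on_compose_snd
        smooth_fun_continuous smooth_fun_deriv smooth_fun_bump)+
  then have psi_meas: "psi \<in> borel_measurable lborel" "psix \<in> borel_measurable lborel"
    "psit \<in> borel_measurable lborel"
    by (simp_all add: borel_measurable_continuous_onI)
  have xi_deriv: "(xi has_real_derivative dxi s) (at s within {s1..s2})" if "s \<in> {s1..s2}" for s
    using that box by (intro has_field_derivative_at_within[OF dxi(1)]) auto
  obtain xc where xc: "continuous_on UNIV xc" "\<And>s. s \<in> {s1..s2} \<Longrightarrow> xc s = xi s"
    "\<And>s. \<exists>s'\<in>{s1..s2}. xc s = xi s'"
    "\<And>s. s \<in> {s1..s2} \<Longrightarrow> (xc has_real_derivative dxi s) (at s within {s1..s2})"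
    by (rule continuous_extension_clamp[OF xi_deriv less_imp_le[OF box(2)]]) (assumption, rule that)
  define H where "H p = (Gl + (Gr - Gl) * indicator {p. xc (snd p) < fst p} p) * psit p" for p
  have "psi p = 0 \<and> psix p = 0 \<and> psit p = 0" if "p \<notin> {a1<..<a2} \<times> {s1<..<s2}" for p
    using that by (cases p) (auto simp: psi_def psix_def psit_def bump_eq_0 deriv_bump_eq_0)
  then have "AE p in lborel. ?F p = H p"
    unfolding psi_def[symmetric] psix_def[symmetric] psit_def[symmetric] H_def
    by (intro cutoff_entropy_integrand_ae_eq[OF phi phase1 phase2 G(3,4) box(1,3) xc(1,2) above]) auto
  moreover have "?F \<in> borel_measurable lborel"
    unfolding psi_def[symmetric] psix_def[symmetric] psit_def[symmetric]
    by (intro entropy_integrand_measurable[OF reg G(1,2)] psi_meas continuous_on_entropy_cutoff_deriv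
        continuous_on_entropy_cutoff_comp[OF continuous_on_id])
  moreover have "open {p :: real \<times> real. xc (snd p) < fst p}"
    by (intro open_Collect_less continuous_on_compose_snd xc(1) continuous_intros)
  then have "H \<in> borel_measurable lborel"
    unfolding H_def[abs_def]
    by (intro borel_measurable_times borel_measurable_add borel_measurable_const
        borel_measurable_indicator psi_meas(3)) simp
  ultimately have "integral\<^sup>L lborel ?F = integral\<^sup>L lborel H"
    by (intro integral_cong_AE)
  also have "\<dots> = (Gr - Gl) * (LBINT s=s1..s2. bump s1 s2 s * (bump a1 a2 (xc s) * dxi s))"
    unfolding H_def[abs_def] psit_def
  proof (rule integral_interface_jump[OF smooth_fun_continuous[OF smooth_fun_bump] _
        smooth_fun_has_derivative[OF smooth_fun_bump]
        smooth_fun_continuous[OF smooth_fun_deriv[OF smooth_fun_bump]] _ xc(1) _ xc(4)])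
    show "a1 < xc s \<and> xc s < a2" for s using xc(3)[of s] box(4) by fastforce
  qed (use box continuous_on_subset[OF dxi(2)] in \<open>auto simp: bump_eq_0 deriv_bump_eq_0\<close>)
  also have "(LBINT s=s1..s2. bump s1 s2 s * (bump a1 a2 (xc s) * dxi s))
      = (LBINT s=s1..s2. bump s1 s2 s * (bump a1 a2 (xi s) * dxi s))"
    using box(2) by (intro interval_integral_cong) (auto simp: xc(2) einterval_def)
  finally show ?thesis .
qed

lemma two_phase_entropy_interface_bound:
  fixes u v :: "real \<times> real \<Rightarrow> real" and xi :: "real \<Rightarrow> real"
  assumes phi: "cubic_type phi b c" and sol: "two_phase_solution phi b c T u0 u v xi"
    and "phi c < m"
    and box: "0 < s1" "s1 < s2" "s2 < T" "\<And>s. s \<in> {s1..s2} \<Longrightarrow> xi s \<in> {a1<..<a2}"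
    and above: "\<And>x s. x \<in> {a1..a2} \<Longrightarrow> s \<in> {s1..s2} \<Longrightarrow> x \<noteq> xi s \<Longrightarrow> m < v (x, s)"
  shows "(LBINT s=s1..s2. bump s1 s2 s * (bump a1 a2 (xi s) * deriv xi s)) \<le> 0"
proof -
  obtain vx where
    reg: "Linf_Q T u" "weak_regularity T v vx"
    and phase1: "AE p in lborel. p \<in> V1 T xi \<longrightarrow> v p \<in> {phi c..phi b} \<and> u p = beta0 phi b c (v p)"
    and phase2: "AE p in lborel. p \<in> V2 T xi \<longrightarrow> phi c \<le> v p \<and> u p = beta2 phi c (v p)"
    and entropy: "\<forall>psi psix psit g dg. test_fun T psi \<and> is_partials psi psix psit \<and>
           (\<forall>p. psi p \<ge> 0) \<and> (\<forall>y. (g has_real_derivative dg y) (at y)) \<and>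
           continuous_on UNIV dg \<and> (\<forall>y. dg y \<ge> 0) \<longrightarrow>
          (LINT p:Q T|lborel. (LBINT s=0..u p. g (phi s)) * psit p
               - g (v p) * vx p * psix p - dg (v p) * (vx p)\<^sup>2 * psi p) \<ge> 0"
    using sol unfolding two_phase_solution_def by (elim exE conjE) blast
  obtain dxi where dxi: "\<And>t. t \<in> {0<..<T} \<Longrightarrow> (xi has_real_derivative dxi t) (at t)"
    "continuous_on {0..T} dxi"
    by (rule two_phase_solution_interface_C1[OF sol]) (rule that)
  define G where "G w = (LBINT s=0..w. entropy_cutoff m (phi s))" for w :: real
  obtain Gl Gr where "Gr < Gl"
    and G_phases: "\<And>w. w \<in> {b..c} \<Longrightarrow> m \<le> phi w \<Longrightarrow> G w = Gl" "\<And>w. c \<le> w \<Longrightarrow> m \<le> phi w \<Longrightarrow> G w = Gr"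
    by (rule cubic_entropy_flux_jump[OF phi \<open>phi c < m\<close>], rule that) (auto simp: G_def)
  have "continuous_on UNIV G"
    using continuous_on_interval_integral_upper[OF
        continuous_on_entropy_cutoff_comp[OF cubic_type_continuous[OF phi]], of 0]
    unfolding G_def[abs_def] zero_ereal_def .
  moreover have "G 0 = 0" by (simp add: G_def zero_ereal_def)
  ultimately have integral_eq:
    "(\<integral>p. indicator (Q T) p * (G (u p) * (bump a1 a2 (fst p) * deriv (bump s1 s2) (snd p))
      - entropy_cutoff m (v p) * vx p * (deriv (bump a1 a2) (fst p) * bump s1 s2 (snd p))
      - entropy_cutoff_deriv m (v p) * (vx p)\<^sup>2 * (bump a1 a2 (fst p) * bump s1 s2 (snd p))) \<partial>lborel)
    = (Gr - Gl) * (LBINT s=s1..s2. bump s1 s2 s * (bump a1 a2 (xi s) * dxi s))"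
    by (rule cutoff_entropy_bump_integral[OF phi reg phase1 phase2 _ _ G_phases dxi box above])
  have "0 \<le> (Gr - Gl) * (LBINT s=s1..s2. bump s1 s2 s * (bump a1 a2 (xi s) * dxi s))"
    unfolding integral_eq[symmetric] G_def
    using entropy[rule_format, of "\<lambda>p. bump a1 a2 (fst p) * bump s1 s2 (snd p)"
        "\<lambda>p. deriv (bump a1 a2) (fst p) * bump s1 s2 (snd p)"
        "\<lambda>p. bump a1 a2 (fst p) * deriv (bump s1 s2) (snd p)" "entropy_cutoff m" "entropy_cutoff_deriv m"]
      test_fun_bump_product[OF box(1,3)] is_partials_product[OF smooth_fun_bump smooth_fun_bump]
      bump_nonneg entropy_cutoff_has_derivative continuous_on_entropy_cutoff_deriv
      entropy_cutoff_deriv_nonneg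
    unfolding set_lebesgue_integral_def by simp
  moreover have "(LBINT s=s1..s2. bump s1 s2 s * (bump a1 a2 (xi s) * dxi s))
      = (LBINT s=s1..s2. bump s1 s2 s * (bump a1 a2 (xi s) * deriv xi s))"
    using box by (intro interval_integral_cong) (auto simp: einterval_def DERIV_imp_deriv[OF dxi(1)])
  ultimately show ?thesis using \<open>Gr < Gl\<close> by (simp add: zero_le_mult_iff)
qed

lemma two_phase_interface_deriv_nonpos:
  fixes u v :: "real \<times> real \<Rightarrow> real" and xi :: "real \<Rightarrow> real"
  assumes phi: "cubic_type phi b c" and sol: "two_phase_solution phi b c T u0 u v xi"
    and "0 < t0" "t0 < T" and above: "phi c < v (xi t0, t0)"
  shows "deriv xi t0 \<le> 0"
proof (rule ccontr)
  obtain dxi where dxi: "\<And>t. t \<in> {0<..<T} \<Longrightarrow> (xi has_real_derivative dxi t) (at t)"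
    "continuous_on {0..T} dxi" "continuous_on {0..T} xi"
    by (rule two_phase_solution_interface_C1[OF sol]) (rule that)
  have deriv_eq: "deriv xi s = dxi s" if "s \<in> {0<..<T}" for s
    using dxi(1)[OF that] by (rule DERIV_imp_deriv)
  assume "\<not> deriv xi t0 \<le> 0"
  then have "0 < dxi t0" using deriv_eq[of t0] \<open>0 < t0\<close> \<open>t0 < T\<close> by simp
  define m where "m = (phi c + v (xi t0, t0)) / 2"
  have "phi c < m" "m < v (xi t0, t0)" using above by (simp_all add: m_def)
  obtain r where "0 < r"
    and r: "\<And>p. p \<in> V1 T xi \<union> V2 T xi \<Longrightarrow> dist p (xi t0, t0) < r \<Longrightarrow> m < v p"
    by (rule two_phase_interface_neighbourhood[OF sol \<open>0 < t0\<close> \<open>t0 < T\<close> \<open>m < v (xi t0, t0)\<close>])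
      (rule that)
  define x0 where "x0 = xi t0"
  have "\<forall>\<^sub>F s in nhds t0. s \<in> {0<..<T} \<and> \<bar>xi s - x0\<bar> < r / 4 \<and> 0 < dxi s"
  proof (intro eventually_conj)
    show "\<forall>\<^sub>F s in nhds t0. s \<in> {0<..<T}"
      using \<open>0 < t0\<close> \<open>t0 < T\<close> by (intro eventually_nhds_in_open) auto
    have "isCont xi t0" using dxi(1) \<open>0 < t0\<close> \<open>t0 < T\<close> by (intro DERIV_isCont) auto
    then show "\<forall>\<^sub>F s in nhds t0. \<bar>xi s - x0\<bar> < r / 4"
      unfolding x0_def isCont_def tendsto_at_iff_tendsto_nhds dist_real_def[symmetric]
      using \<open>0 < r\<close> by (intro tendstoD) auto
    have "isCont dxi t0" using dxi(2) \<open>0 < t0\<close> \<open>t0 < T\<close> by (intro continuous_on_interior) auto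
    then show "\<forall>\<^sub>F s in nhds t0. 0 < dxi s"
      unfolding isCont_def tendsto_at_iff_tendsto_nhds using \<open>0 < dxi t0\<close> by (intro order_tendstoD(1))
  qed
  moreover have "0 < r / 4" using \<open>0 < r\<close> by simp
  ultimately obtain e where "0 < e" "e \<le> r / 4"
    and near: "\<And>s. s \<in> {t0 - e..t0 + e} \<Longrightarrow> s \<in> {0<..<T} \<and> \<bar>xi s - x0\<bar> < r / 4 \<and> 0 < dxi s"
    by (rule eventually_nhds_closed_interval) (rule that)
  define s1 where "s1 = t0 - e"
  define s2 where "s2 = t0 + e"
  have s12: "0 < s1" "s1 < s2" "s2 < T" "t0 \<in> {s1<..<s2}"
    using near[of s1] near[of s2] \<open>0 < e\<close> by (auto simp: s1_def s2_def)
  have "(LBINT s=s1..s2. bump s1 s2 s * (bump (x0 - r / 2) (x0 + r / 2) (xi s) * deriv xi s)) \<le> 0"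
  proof (rule two_phase_entropy_interface_bound[OF phi sol \<open>phi c < m\<close> s12(1-3)])
    show "xi s \<in> {x0 - r / 2<..<x0 + r / 2}" if "s \<in> {s1..s2}" for s
      using near[of s] that \<open>0 < r\<close> unfolding abs_less_iff s1_def s2_def by auto
    fix x s assume x: "x \<in> {x0 - r / 2..x0 + r / 2}" and s: "s \<in> {s1..s2}" and "x \<noteq> xi s"
    then have "(x, s) \<in> V1 T xi \<union> V2 T xi"
      using near[of s] by (auto simp: V1_def V2_def s1_def s2_def)
    moreover have "dist x x0 \<le> r / 2" "dist s t0 \<le> r / 4"
      using x s \<open>e \<le> r / 4\<close> unfolding dist_real_def abs_le_iff s1_def s2_def by auto
    then have "dist (x, s) (x0, t0) < r"
      using dist_Pair_le_add[of x s x0 t0] \<open>0 < r\<close> by linarith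
    ultimately show "m < v (x, s)" unfolding x0_def by (rule r)
  qed
  moreover have "0 < (LBINT s=s1..s2. bump s1 s2 s * (bump (x0 - r / 2) (x0 + r / 2) (xi s) * deriv xi s))"
  proof (rule interval_integral_bump_weighted_pos)
    have "{s1..s2} \<subseteq> {0..T}" using s12 by auto
    then show "continuous_on {s1..s2} xi" "continuous_on {s1..s2} (deriv xi)"
      using near deriv_eq
      by (auto intro!: continuous_on_subset[OF dxi(3)] continuous_on_eq[OF continuous_on_subset[OF dxi(2)]]
          simp: s1_def s2_def)
    show "0 < deriv xi s" if "s \<in> {s1..s2}" for s
      using near[of s] deriv_eq[of s] that by (auto simp: s1_def s2_def)
  qed (use s12 \<open>0 < r\<close> in \<open>auto simp: x0_def\<close>)
  ultimately show False by simp
qed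

theorem proposition2p4:
  fixes phi :: "real \<Rightarrow> real" and b c T t1 t2 :: real
    and u0 :: "real \<Rightarrow> real"
    and u v :: "real \<times> real \<Rightarrow> real" and xi :: "real \<Rightarrow> real"
  assumes phi: "cubic_type phi b c"
    and T: "T > 0"
    and u0_Linf: "Linf_R u0"
    and u0_cont: "continuous_on UNIV (\<lambda>x. phi (u0 x))"
    and u0_C1_neg: "(\<lambda>x. phi (u0 x)) C1_differentiable_on {..<0}"
    and u0_C1_pos: "(\<lambda>x. phi (u0 x)) C1_differentiable_on {0<..}"
    and u0_L1_neg: "set_integrable lborel {..<0} (deriv (\<lambda>x. phi (u0 x)))"
    and u0_L1_pos: "set_integrable lborel {0<..} (deriv (\<lambda>x. phi (u0 x)))"
    and u0_neg: "\<And>x. x < 0 \<Longrightarrow> u0 x \<in> {b<..<c}"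
    and u0_pos: "\<And>x. x > 0 \<Longrightarrow> u0 x \<in> {c..}"
    and sol: "two_phase_solution phi b c T u0 u v xi"
    and t12: "0 \<le> t1" "t2 \<le> T"
    and above: "\<And>t. t \<in> {t1<..<t2} \<Longrightarrow> v (xi t, t) > phi c"
  shows "\<forall>t\<in>{t1<..<t2}. deriv xi t \<le> 0"
proof
  fix t assume "t \<in> {t1<..<t2}"
  then show "deriv xi t \<le> 0"
    using t12 above by (intro two_phase_interface_deriv_nonpos[OF phi sol]) auto
qed

end
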